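(* An undirected graph $\mathcal{U}$ is a UEC-representative if and only if $\alpha(\mathcal{U})=\delta(\mathcal{U})$.
   Context: For a DAG $\mathcal{D}$, a trek is a path with no repeated vertices and no collider (a node whose two incident path edges both point into it); the unconditional dependence graph $\mathcal{U}^\mathcal{D}$ is the undirected graph on the nodes of $\mathcal{D}$ in which distinct $v,w$ are adjacent iff there is a trek between them. An undirected graph $\mathcal{U}$ on vertex set $V$ is a UEC-representative if $\mathcal{U}=\mathcal{U}^\mathcal{D}$ for some DAG $\mathcal{D}$ on $V$. A clique is a set of pairwise adjacent vertices (single vertices are cliques). An edge clique cover of $\mathcal{U}$ is a collection of cliques such that every vertex and every edge of $\mathcal{U}$ lies in at least one clique of the collection; the intersection number $\delta(\mathcal{U})$ is the minimum cardinality of an edge clique cover. The independence number $\alpha(\mathcal{U})$ is the maximum cardinality of a set of pairwise nonadjacent vertices. *)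

theory Defs
  imports Main
begin

definition undirected_graph :: "'a set \<Rightarrow> 'a rel \<Rightarrow> bool" where
  "undirected_graph V U \<longleftrightarrow> finite V \<and> U \<subseteq> V \<times> V \<and> sym U \<and> irrefl U"

definition dag :: "'a set \<Rightarrow> 'a rel \<Rightarrow> bool" where
  "dag V D \<longleftrightarrow> D \<subseteq> V \<times> V \<and> acyclic D"

definition trek :: "'a rel \<Rightarrow> 'a list \<Rightarrow> 'a \<Rightarrow> 'a \<Rightarrow> bool" where
  "trek D p v w \<longleftrightarrow> p \<noteq> [] \<and> hd p = v \<and> last p = w \<and> distinct p \<and>
     (\<forall>i. Suc i < length p \<longrightarrow> (p ! i, p ! Suc i) \<in> D \<or> (p ! Suc i, p ! i) \<in> D) \<and>
     (\<forall>i. Suc (Suc i) < length p \<longrightarrow>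
        \<not> ((p ! i, p ! Suc i) \<in> D \<and> (p ! Suc (Suc i), p ! Suc i) \<in> D))"

definition udg :: "'a set \<Rightarrow> 'a rel \<Rightarrow> 'a rel" where
  "udg V D = {(v, w). v \<in> V \<and> w \<in> V \<and> v \<noteq> w \<and> (\<exists>p. trek D p v w)}"

definition UEC_representative :: "'a set \<Rightarrow> 'a rel \<Rightarrow> bool" where
  "UEC_representative V U \<longleftrightarrow> (\<exists>D. dag V D \<and> U = udg V D)"

definition is_clique :: "'a set \<Rightarrow> 'a rel \<Rightarrow> 'a set \<Rightarrow> bool" where
  "is_clique V U C \<longleftrightarrow> C \<noteq> {} \<and> C \<subseteq> V \<and> (\<forall>x\<in>C. \<forall>y\<in>C. x \<noteq> y \<longrightarrow> (x, y) \<in> U)"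

definition edge_clique_cover :: "'a set \<Rightarrow> 'a rel \<Rightarrow> 'a set set \<Rightarrow> bool" where
  "edge_clique_cover V U \<C> \<longleftrightarrow> (\<forall>C\<in>\<C>. is_clique V U C) \<and>
     (\<forall>v\<in>V. \<exists>C\<in>\<C>. v \<in> C) \<and>
     (\<forall>(x, y)\<in>U. \<exists>C\<in>\<C>. x \<in> C \<and> y \<in> C)"

definition intersection_number :: "'a set \<Rightarrow> 'a rel \<Rightarrow> nat" where
  "intersection_number V U = (LEAST k. \<exists>\<C>. edge_clique_cover V U \<C> \<and> finite \<C> \<and> card \<C> = k)"

definition independent_set :: "'a set \<Rightarrow> 'a rel \<Rightarrow> 'a set \<Rightarrow> bool" where
  "independent_set V U S \<longleftrightarrow> S \<subseteq> V \<and> (\<forall>x\<in>S. \<forall>y\<in>S. (x, y) \<notin> U)"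

definition independence_number :: "'a set \<Rightarrow> 'a rel \<Rightarrow> nat" where
  "independence_number V U = Max {card S | S. independent_set V U S}"

end

theory Submission
  imports Defs
begin

text \<open>In a DAG two vertices are joined by a trek exactly when they have a common ancestor:
a trek climbs from one end to its unique top vertex and descends to the other, and
conversely a trek can be grown from an ancestor one edge at a time, cutting it short
whenever the new vertex already lies on it. Consequently the descendant sets of the
sources form an edge clique cover of the dependence graph, while the sources are pairwise
non-adjacent; so \<open>\<delta> \<le> \<alpha>\<close>, and \<open>\<alpha> \<le> \<delta>\<close> holds in every graph because a
clique meets an independent set at most once. Conversely, if \<open>\<alpha> = \<delta>\<close>, the cliques of a
minimum cover correspond bijectively to the vertices of a maximum independent set \<open>S\<close>;
orienting each clique as a star from its vertex in \<open>S\<close> gives a DAG of depth one whose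
dependence graph is the given graph.\<close>

lemma trek_singleton: "trek D [v] v v"
  by (simp add: trek_def)

lemma trek_Cons_Cons:
  "trek D (a # b # r) v w \<longleftrightarrow>
     v = a \<and> a \<notin> set (b # r) \<and> ((a, b) \<in> D \<or> (b, a) \<in> D) \<and>
     (r \<noteq> [] \<longrightarrow> \<not> ((a, b) \<in> D \<and> (hd r, b) \<in> D)) \<and> trek D (b # r) b w"
proof -
  have all_Suc_less_Cons: "(\<forall>i. Suc i < length (x # xs) \<longrightarrow> P i) \<longleftrightarrow>
      (xs \<noteq> [] \<longrightarrow> P 0) \<and> (\<forall>i. Suc i < length xs \<longrightarrow> P (Suc i))" for x :: 'a and xs P
    by (auto simp: less_Suc_eq_0_disj) (metis not0_implies_Suc)
  have all_Suc_Suc_less_Cons: "(\<forall>i. Suc (Suc i) < length (x # xs) \<longrightarrow> P i) \<longleftrightarrow>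
      (\<forall>i. Suc i < length xs \<longrightarrow> P i)" for x :: 'a and xs P
    by simp
  show ?thesis
    unfolding trek_def all_Suc_Suc_less_Cons all_Suc_less_Cons[of _ "b # r"] all_Suc_less_Cons[of _ r]
    by (cases r) (auto simp: hd_conv_nth)
qed

lemma trek_rev:
  assumes "trek D p v w"
  shows "trek D (rev p) w v"
proof -
  define n where "n = length p"
  have adj: "\<And>j. Suc j < n \<Longrightarrow> (p ! j, p ! Suc j) \<in> D \<or> (p ! Suc j, p ! j) \<in> D"
    and nocoll: "\<And>j. Suc (Suc j) < n \<Longrightarrow> \<not> ((p ! j, p ! Suc j) \<in> D \<and> (p ! Suc (Suc j), p ! Suc j) \<in> D)"
    using assms unfolding trek_def n_def by blast+
  have rev_adj: "(rev p ! i, rev p ! Suc i) \<in> D \<or> (rev p ! Suc i, rev p ! i) \<in> D"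
    if "Suc i < n" for i
    using adj[of "n - Suc (Suc i)"] that
    by (auto simp: rev_nth n_def Suc_diff_Suc)
  have rev_nocoll: "\<not> ((rev p ! i, rev p ! Suc i) \<in> D \<and> (rev p ! Suc (Suc i), rev p ! Suc i) \<in> D)"
    if "Suc (Suc i) < n" for i
  proof -
    have "Suc (n - Suc (Suc (Suc i))) = n - Suc (Suc i)" "Suc (Suc (n - Suc (Suc (Suc i)))) = n - Suc i"
      "n - Suc i < n"
      using that by arith+
    then show ?thesis
      using nocoll[of "n - Suc (Suc (Suc i))"] that by (auto simp: rev_nth n_def)
  qed
  show ?thesis
    using assms rev_adj rev_nocoll unfolding trek_def n_def by (simp add: hd_rev last_rev)
qed

lemma trek_suffix:
  assumes "trek D p v w" "u \<in> set p"
  shows "\<exists>q. trek D q u w"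
  using assms
proof (induction p arbitrary: v)
  case Nil
  then show ?case by simp
next
  case (Cons a q)
  show ?case
  proof (cases "u = a")
    case True
    moreover have "v = a" using Cons.prems(1) by (simp add: trek_def)
    ultimately show ?thesis using Cons.prems(1) by blast
  next
    case False
    then obtain b r where "q = b # r" "u \<in> set q"
      using Cons.prems(2) by (cases q) auto
    then show ?thesis
      using Cons.IH Cons.prems(1) trek_Cons_Cons[of D a b r v w] by blast
  qed
qed

lemma acyclic_asym: "acyclic D \<Longrightarrow> (u, v) \<in> D \<Longrightarrow> (v, u) \<notin> D"
  by (meson acyclic_def trancl.r_into_trancl trancl_into_trancl)

text \<open>Either \<open>u\<close> already lies on \<open>p\<close> and we cut \<open>p\<close> there, or we prepend \<open>u\<close>;
acyclicity then excludes a collider at \<open>v\<close>.\<close>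

lemma trek_child:
  assumes "acyclic D" "trek D p v w" "(v, u) \<in> D"
  shows "\<exists>q. trek D q u w"
proof (cases "u \<in> set p")
  case True
  then show ?thesis using trek_suffix[OF assms(2)] by blast
next
  case False
  obtain r where "p = v # r"
    using assms(2) unfolding trek_def by (cases p) auto
  then have "trek D (u # v # r) u w"
    using False assms(1,2,3) trek_Cons_Cons[of D u v r u w] acyclic_asym[of D v u] by auto
  then show ?thesis by blast
qed

lemma trek_from_ancestor:
  assumes "acyclic D" "(t, y) \<in> D\<^sup>*"
  shows "\<exists>p. trek D p t y"
  using assms(2)
proof (induction rule: rtrancl_induct)
  case base
  have "trek D [t] t t" by (rule trek_singleton)
  then show ?case by blast
next
  case (step y' y)
  from step.IH obtain p where "trek D p t y'" by blast
  then have "trek D (rev p) y' t" by (rule trek_rev)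
  then obtain q where "trek D q y t" using trek_child[OF assms(1) _ step.hyps(2)] by blast
  then have "trek D (rev q) t y" by (rule trek_rev)
  then show ?case by blast
qed

lemma common_ancestor_trek:
  assumes "acyclic D" "(t, x) \<in> D\<^sup>*" "(t, y) \<in> D\<^sup>*"
  shows "\<exists>p. trek D p x y"
  using assms(2)
proof (induction rule: rtrancl_induct)
  case base
  then show ?case using trek_from_ancestor[OF assms(1,3)] .
next
  case (step x' x)
  from step.IH obtain p where "trek D p x' y" by blast
  then show ?case using trek_child[OF assms(1) _ step.hyps(2)] by blast
qed

text \<open>Without colliders, a trek that leaves its start along an out-edge continues forward
to its end.\<close>

lemma trek_forward_start_rtrancl:
  assumes "trek D (a # q) a w" "q \<noteq> []" "(a, hd q) \<in> D"
  shows "(a, w) \<in> D\<^sup>*"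
  using assms
proof (induction q arbitrary: a)
  case Nil
  then show ?case by simp
next
  case (Cons b r)
  show ?case
  proof (cases r)
    case Nil
    then show ?thesis using Cons.prems by (auto simp: trek_def)
  next
    case (Cons c r')
    then have "(b, c) \<in> D" "trek D (b # r) b w"
      using Cons.prems trek_Cons_Cons[of D a b r a w] trek_Cons_Cons[of D b c r' b w] by auto
    then have "(b, w) \<in> D\<^sup>*" using Cons.IH \<open>r = c # r'\<close> by simp
    then show ?thesis using Cons.prems(3) by (simp add: converse_rtrancl_into_rtrancl)
  qed
qed

lemma trek_common_ancestor:
  assumes "trek D p v w"
  shows "\<exists>t. (t, v) \<in> D\<^sup>* \<and> (t, w) \<in> D\<^sup>*"
  using assms
proof (induction p arbitrary: v)
  case Nil
  then show ?case by (simp add: trek_def)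
next
  case (Cons a q)
  show ?case
  proof (cases q)
    case Nil
    then show ?thesis using Cons.prems by (auto simp: trek_def)
  next
    case (Cons b r)
    then have ab: "v = a" "(a, b) \<in> D \<or> (b, a) \<in> D" "trek D (b # r) b w"
      using Cons.prems trek_Cons_Cons[of D a b r v w] by auto
    show ?thesis
    proof (cases "(a, b) \<in> D")
      case True
      then show ?thesis using trek_forward_start_rtrancl[of D a q w] Cons.prems ab(1) \<open>q = b # r\<close> by auto
    next
      case False
      then obtain t where "(t, b) \<in> D\<^sup>*" "(t, w) \<in> D\<^sup>*"
        using Cons.IH ab(3) \<open>q = b # r\<close> by blast
      then show ?thesis using False ab(1,2) by (meson rtrancl.rtrancl_into_rtrancl)
    qed
  qed
qed

lemma trek_iff_common_ancestor:
  assumes "acyclic D"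
  shows "(\<exists>p. trek D p x y) \<longleftrightarrow> (\<exists>t. (t, x) \<in> D\<^sup>* \<and> (t, y) \<in> D\<^sup>*)"
proof
  assume "\<exists>p. trek D p x y"
  then show "\<exists>t. (t, x) \<in> D\<^sup>* \<and> (t, y) \<in> D\<^sup>*" by (auto dest: trek_common_ancestor)
next
  assume "\<exists>t. (t, x) \<in> D\<^sup>* \<and> (t, y) \<in> D\<^sup>*"
  then show "\<exists>p. trek D p x y" using common_ancestor_trek[OF assms] by blast
qed

lemma udg_eq_common_ancestor:
  assumes "acyclic D"
  shows "udg V D = {(v, w). v \<in> V \<and> w \<in> V \<and> v \<noteq> w \<and> (\<exists>t. (t, v) \<in> D\<^sup>* \<and> (t, w) \<in> D\<^sup>*)}"
  unfolding udg_def trek_iff_common_ancestor[OF assms] ..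

lemma clique_independent_set_unique:
  assumes "is_clique V U K" "independent_set V U S" "a \<in> K" "b \<in> K" "a \<in> S" "b \<in> S"
  shows "a = b"
  using assms unfolding is_clique_def independent_set_def by blast

lemma edge_clique_cover_representatives:
  assumes "edge_clique_cover V U C" "independent_set V U S"
  obtains c where "\<And>s. s \<in> S \<Longrightarrow> c s \<in> C \<and> s \<in> c s" "inj_on c S"
proof -
  have "\<forall>s\<in>S. \<exists>K\<in>C. s \<in> K"
    using assms unfolding edge_clique_cover_def independent_set_def by blast
  then obtain c where c: "\<And>s. s \<in> S \<Longrightarrow> c s \<in> C \<and> s \<in> c s" by metis
  have "inj_on c S"
  proof (rule inj_onI)
    fix a b assume "a \<in> S" "b \<in> S" "c a = c b"
    moreover have "is_clique V U (c a)"
      using assms(1) c[OF \<open>a \<in> S\<close>] unfolding edge_clique_cover_def by blast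
    ultimately show "a = b" using c clique_independent_set_unique[OF _ assms(2)] by metis
  qed
  with c show thesis using that by blast
qed

lemma card_independent_set_le_card_cover:
  assumes "edge_clique_cover V U C" "finite C" "independent_set V U S"
  shows "card S \<le> card C"
proof -
  obtain c where "\<And>s. s \<in> S \<Longrightarrow> c s \<in> C \<and> s \<in> c s" "inj_on c S"
    using edge_clique_cover_representatives[OF assms(1,3)] by blast
  then show ?thesis using card_inj_on_le[OF _ _ assms(2)] by blast
qed

lemma finite_card_independent_sets:
  assumes "finite V"
  shows "finite {card S | S. independent_set V U S}"
proof -
  have "{card S | S. independent_set V U S} \<subseteq> {..card V}"
    using card_mono[OF assms] unfolding independent_set_def by auto
  then show ?thesis by (rule finite_subset) simp
qed

lemma independence_number_attained:
  assumes "finite V"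
  shows "\<exists>S. independent_set V U S \<and> card S = independence_number V U"
proof -
  have "independent_set V U {}" unfolding independent_set_def by simp
  then have "{card S | S. independent_set V U S} \<noteq> {}" by blast
  then have "independence_number V U \<in> {card S | S. independent_set V U S}"
    unfolding independence_number_def by (rule Max_in[OF finite_card_independent_sets[OF assms]])
  then show ?thesis by auto
qed

lemma card_le_independence_number:
  "finite V \<Longrightarrow> independent_set V U S \<Longrightarrow> card S \<le> independence_number V U"
  unfolding independence_number_def by (rule Max_ge[OF finite_card_independent_sets]) blast+

lemma intersection_number_le_card:
  "edge_clique_cover V U C \<Longrightarrow> finite C \<Longrightarrow> intersection_number V U \<le> card C"
  unfolding intersection_number_def by (rule Least_le) blast

lemma edge_clique_cover_vertices_edges:
  assumes "undirected_graph V U"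
  shows "edge_clique_cover V U ((\<lambda>v. {v}) ` V \<union> (\<lambda>(x, y). {x, y}) ` U)"
proof -
  have "is_clique V U {x, y}" if "(x, y) \<in> U" for x y
  proof -
    have "(y, x) \<in> U" using that assms symD unfolding undirected_graph_def by metis
    then show ?thesis using that assms unfolding undirected_graph_def is_clique_def by auto
  qed
  moreover have "is_clique V U {v}" if "v \<in> V" for v
    using that unfolding is_clique_def by simp
  ultimately show ?thesis unfolding edge_clique_cover_def by auto
qed

lemma intersection_number_attained:
  assumes "undirected_graph V U"
  shows "\<exists>C. edge_clique_cover V U C \<and> finite C \<and> card C = intersection_number V U"
proof -
  have "finite U"
    using assms finite_subset unfolding undirected_graph_def by (metis finite_SigmaI)
  then have "\<exists>C. edge_clique_cover V U C \<and> finite C"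
    using edge_clique_cover_vertices_edges[OF assms] assms
    unfolding undirected_graph_def by blast
  then have "\<exists>k C. edge_clique_cover V U C \<and> finite C \<and> card C = k" by blast
  then show ?thesis unfolding intersection_number_def by (rule LeastI_ex)
qed

lemma independence_number_le_intersection_number:
  assumes "undirected_graph V U"
  shows "independence_number V U \<le> intersection_number V U"
proof -
  have "finite V" using assms unfolding undirected_graph_def by blast
  then obtain S where "independent_set V U S" "card S = independence_number V U"
    using independence_number_attained by blast
  moreover obtain C where "edge_clique_cover V U C" "finite C" "card C = intersection_number V U"
    using intersection_number_attained[OF assms] by blast
  ultimately show ?thesis using card_independent_set_le_card_cover by metis
qed

lemma edge_clique_cover_edges:
  assumes "undirected_graph V U" "edge_clique_cover V U C"
  shows "U = {(x, y). x \<noteq> y \<and> (\<exists>K\<in>C. x \<in> K \<and> y \<in> K)}"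
proof (intro set_eqI iffI)
  fix e assume "e \<in> U"
  moreover obtain x y where "e = (x, y)" by fastforce
  moreover have "x \<noteq> y" using assms(1) \<open>e \<in> U\<close> \<open>e = (x, y)\<close>
    unfolding undirected_graph_def irrefl_def by blast
  ultimately show "e \<in> {(x, y). x \<noteq> y \<and> (\<exists>K\<in>C. x \<in> K \<and> y \<in> K)}"
    using assms(2) unfolding edge_clique_cover_def by blast
next
  fix e assume "e \<in> {(x, y). x \<noteq> y \<and> (\<exists>K\<in>C. x \<in> K \<and> y \<in> K)}"
  then show "e \<in> U" using assms(2) unfolding edge_clique_cover_def is_clique_def by blast
qed

lemma dag_rtrancl_mem_iff:
  assumes "dag V D" "(t, x) \<in> D\<^sup>*"
  shows "t \<in> V \<longleftrightarrow> x \<in> V"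
proof -
  have "D\<^sup>+ \<subseteq> V \<times> V" using assms(1) trancl_subset_Sigma unfolding dag_def by blast
  then show ?thesis using assms(2) by (auto simp: rtrancl_eq_or_trancl)
qed

lemma dag_source_ancestor:
  assumes "finite V" "dag V D" "x \<in> V"
  shows "\<exists>s\<in>V - Range D. (s, x) \<in> D\<^sup>*"
proof -
  have "finite D" using assms(1,2) finite_subset unfolding dag_def by (metis finite_SigmaI)
  then have "wf D" using assms(2) finite_acyclic_wf unfolding dag_def by blast
  then show ?thesis using assms(3)
  proof (induction x rule: wf_induct_rule)
    case (less x)
    show ?case
    proof (cases "x \<in> Range D")
      case True
      then obtain a where "(a, x) \<in> D" by blast
      moreover have "a \<in> V" using \<open>(a, x) \<in> D\<close> assms(2) unfolding dag_def by blast
      ultimately show ?thesis using less.IH by (meson rtrancl_into_rtrancl)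
    next
      case False
      then show ?thesis using less.prems by blast
    qed
  qed
qed

lemma rtrancl_source_eq:
  "s \<notin> Range D \<Longrightarrow> (t, s) \<in> D\<^sup>* \<Longrightarrow> t = s"
  by (erule rtranclE) auto

lemma intersection_number_udg_le_independence_number:
  assumes "finite V" "dag V D"
  shows "intersection_number V (udg V D) \<le> independence_number V (udg V D)"
proof -
  let ?U = "udg V D" and ?S = "V - Range D" and ?K = "\<lambda>s. {x. (s, x) \<in> D\<^sup>*}"
  have udg: "?U = {(v, w). v \<in> V \<and> w \<in> V \<and> v \<noteq> w \<and> (\<exists>t. (t, v) \<in> D\<^sup>* \<and> (t, w) \<in> D\<^sup>*)}"
    using assms(2) udg_eq_common_ancestor[of D V] unfolding dag_def by simp
  have K_sub: "?K s \<subseteq> V" if "s \<in> V" for s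
    using that dag_rtrancl_mem_iff[OF assms(2), of s] by auto
  have cover: "edge_clique_cover V ?U (?K ` ?S)"
    unfolding edge_clique_cover_def
  proof (intro conjI ballI)
    fix K assume "K \<in> ?K ` ?S"
    then obtain s where "s \<in> V" "K = ?K s" by blast
    then show "is_clique V ?U K"
      using K_sub[of s] unfolding is_clique_def udg by blast
  next
    fix v assume "v \<in> V"
    then obtain s where "s \<in> ?S" "(s, v) \<in> D\<^sup>*" using dag_source_ancestor[OF assms] by blast
    then show "\<exists>K\<in>?K ` ?S. v \<in> K" by blast
  next
    fix e assume "e \<in> ?U"
    then obtain x y t where "e = (x, y)" "x \<in> V" "(t, x) \<in> D\<^sup>*" "(t, y) \<in> D\<^sup>*"
      unfolding udg by blast
    moreover have "t \<in> V" using dag_rtrancl_mem_iff[OF assms(2) \<open>(t, x) \<in> D\<^sup>*\<close>] \<open>x \<in> V\<close> ..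
    then obtain s where "s \<in> ?S" "(s, t) \<in> D\<^sup>*"
      using dag_source_ancestor[OF assms] by blast
    ultimately show "case e of (x, y) \<Rightarrow> \<exists>K\<in>?K ` ?S. x \<in> K \<and> y \<in> K"
      using rtrancl_trans[of s t D] by auto
  qed
  have "independent_set V ?U ?S"
    unfolding independent_set_def udg using rtrancl_source_eq[of _ D] by blast
  have "intersection_number V ?U \<le> card (?K ` ?S)"
    using intersection_number_le_card[OF cover] assms(1) by blast
  also have "\<dots> \<le> card ?S" using assms(1) by (intro card_image_le) blast
  also have "\<dots> \<le> independence_number V ?U"
    using card_le_independence_number[OF assms(1) \<open>independent_set V ?U ?S\<close>] .
  finally show ?thesis .
qed

definition star_dag :: "'a set \<Rightarrow> ('a \<Rightarrow> 'a set) \<Rightarrow> 'a rel" where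
  "star_dag S c = {(s, x). s \<in> S \<and> x \<in> c s - S}"

lemma trancl_star_dag: "(star_dag S c)\<^sup>+ = star_dag S c"
  by (rule trancl_id) (auto simp: star_dag_def intro: transI)

lemma rtrancl_star_dag: "(t, x) \<in> (star_dag S c)\<^sup>* \<longleftrightarrow> t = x \<or> (t, x) \<in> star_dag S c"
  by (auto simp: rtrancl_eq_or_trancl trancl_star_dag)

lemma dag_star_dag:
  assumes "S \<subseteq> V" "\<And>s. s \<in> S \<Longrightarrow> c s \<subseteq> V"
  shows "dag V (star_dag S c)"
  using assms unfolding dag_def acyclic_def trancl_star_dag by (auto simp: star_dag_def)

lemma udg_star_dag:
  assumes "S \<subseteq> V" "\<And>s. s \<in> S \<Longrightarrow> c s \<subseteq> V \<and> c s \<inter> S = {s}"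
  shows "udg V (star_dag S c) = {(x, y). x \<noteq> y \<and> (\<exists>s\<in>S. x \<in> c s \<and> y \<in> c s)}"
proof -
  have "acyclic (star_dag S c)" using dag_star_dag[of S V c] assms unfolding dag_def by blast
  then have udg: "udg V (star_dag S c) = {(x, y). x \<in> V \<and> y \<in> V \<and> x \<noteq> y \<and>
      (\<exists>t. (t, x) \<in> (star_dag S c)\<^sup>* \<and> (t, y) \<in> (star_dag S c)\<^sup>*)}"
    by (rule udg_eq_common_ancestor)
  have member: "(s, x) \<in> (star_dag S c)\<^sup>* \<longleftrightarrow> x \<in> c s" if "s \<in> S" for s x
    using that assms(2)[OF that] unfolding rtrancl_star_dag unfolding star_dag_def by auto
  have non_source: "t = x" if "t \<notin> S" "(t, x) \<in> (star_dag S c)\<^sup>*" for t x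
    using that unfolding rtrancl_star_dag unfolding star_dag_def by blast
  show ?thesis
  proof (intro set_eqI iffI)
    fix e assume "e \<in> udg V (star_dag S c)"
    then obtain x y t where "e = (x, y)" "x \<noteq> y"
      "(t, x) \<in> (star_dag S c)\<^sup>*" "(t, y) \<in> (star_dag S c)\<^sup>*"
      unfolding udg by blast
    then show "e \<in> {(x, y). x \<noteq> y \<and> (\<exists>s\<in>S. x \<in> c s \<and> y \<in> c s)}"
      using member non_source by blast
  next
    fix e assume "e \<in> {(x, y). x \<noteq> y \<and> (\<exists>s\<in>S. x \<in> c s \<and> y \<in> c s)}"
    then obtain x y s where "e = (x, y)" "x \<noteq> y" "s \<in> S" "x \<in> c s" "y \<in> c s" by blast
    then show "e \<in> udg V (star_dag S c)"
      using member assms(2) unfolding udg by blast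
  qed
qed

lemma UEC_representative_if_independence_number_eq:
  assumes "undirected_graph V U" "independence_number V U = intersection_number V U"
  shows "UEC_representative V U"
proof -
  obtain S where S: "independent_set V U S" "card S = independence_number V U"
    using assms(1) independence_number_attained unfolding undirected_graph_def by blast
  obtain C where C: "edge_clique_cover V U C" "finite C" "card C = intersection_number V U"
    using intersection_number_attained[OF assms(1)] by blast
  obtain c where c: "\<And>s. s \<in> S \<Longrightarrow> c s \<in> C \<and> s \<in> c s" "inj_on c S"
    using edge_clique_cover_representatives[OF C(1) S(1)] by blast
  have "card (c ` S) = card C" using card_image[OF c(2)] S(2) C(3) assms(2) by simp
  then have image: "c ` S = C" using card_subset_eq[OF C(2)] c(1) by blast
  have reps: "c s \<subseteq> V \<and> c s \<inter> S = {s}" if "s \<in> S" for s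
  proof -
    have "is_clique V U (c s)" using C(1) c(1)[OF that] unfolding edge_clique_cover_def by blast
    then show ?thesis
      using c(1)[OF that] that clique_independent_set_unique[OF _ S(1)] unfolding is_clique_def by blast
  qed
  have "S \<subseteq> V" using S(1) unfolding independent_set_def by blast
  have "dag V (star_dag S c)" using dag_star_dag[OF \<open>S \<subseteq> V\<close>] reps by blast
  moreover have "U = {(x, y). x \<noteq> y \<and> (\<exists>s\<in>S. x \<in> c s \<and> y \<in> c s)}"
    using edge_clique_cover_edges[OF assms(1) C(1)] unfolding image[symmetric] by simp
  moreover have "udg V (star_dag S c) = {(x, y). x \<noteq> y \<and> (\<exists>s\<in>S. x \<in> c s \<and> y \<in> c s)}"
    using udg_star_dag[OF \<open>S \<subseteq> V\<close> reps] .
  ultimately show ?thesis unfolding UEC_representative_def by metis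
qed

theorem theorem2p9:
  fixes V :: "'a set" and U :: "'a rel"
  assumes "undirected_graph V U"
  shows "UEC_representative V U \<longleftrightarrow> independence_number V U = intersection_number V U"
proof
  assume "UEC_representative V U"
  then obtain D where "dag V D" "U = udg V D" unfolding UEC_representative_def by blast
  moreover have "finite V" using assms unfolding undirected_graph_def by blast
  ultimately have "intersection_number V U \<le> independence_number V U"
    using intersection_number_udg_le_independence_number by blast
  then show "independence_number V U = intersection_number V U"
    using independence_number_le_intersection_number[OF assms] by linarith
next
  assume "independence_number V U = intersection_number V U"
  then show "UEC_representative V U"
    by (rule UEC_representative_if_independence_number_eq[OF assms])
qed

end
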